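(* Let $R=k[x_1,\dots,x_n]$ be a standard graded polynomial ring over a field $k$, $I\subseteq R$ a homogeneous ideal, and $(F_\bullet,d_\bullet)$ a homogeneous free resolution of $R/I$ with $F_0=R$. Write $F_1=F_1'\oplus Re_0$ with $e_0$ generating a free direct summand, and $d_2=d_2'+d_0$ with $d_2':F_2\to F_1'$, $d_0:F_2\to Re_0$. Let $\mathfrak a$ be a homogeneous ideal with $d_0(F_2)\subseteq\mathfrak a e_0$, and let $(G_\bullet,m_\bullet)$ be a homogeneous free resolution of $R/\mathfrak a$ with $G_0=R$. Let $K'=d_1(F_1')$, $K_0=(d_1(e_0))$ and $J=K'+\mathfrak a K_0$. Let $d_0':F_2\to R$ be $d_0$ followed by $e_0\mapsto 1$, and let $q_1:F_2\to G_1$ and $q_k:F_{k+1}\to G_k$ ($k\ge2$) be homomorphisms with $m_1q_1=d_0'$ and $m_kq_k=q_{k-1}d_{k+1}$ for $k\ge 2$. Consider the complex $T_\bullet$: $\cdots\to F_3\xrightarrow{d_3}F_2\xrightarrow{d_2'}F_1'$ (with $F_1'$ in homological degree $0$ and $F_{i}$ in degree $i-1$), and the complex $B_\bullet$: $\cdots\to G_2\xrightarrow{m_2}G_1\xrightarrow{\beta}R$, where $\beta(g)=-m_1(g)\cdot d_1(e_0)$ (with $R$ in degree $0$). Then the maps $d_1|_{F_1'}:F_1'\to R$ and $q_{i-1}:F_i\to G_{i-1}$ ($i\ge2$) form a morphism of complexes $T_\bullet\to B_\bullet$, and the mapping cone of this morphism is a free resolution of $R/J$.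
   Context: The decomposition $d_2=d_2'+d_0$ is obtained by composing $d_2$ with the projections of $F_1=F_1'\oplus Re_0$ onto its summands. The mapping cone has $R$ in homological degree $0$, $F_1'\oplus G_1$ in degree $1$, and $F_i\oplus G_i$ in degree $i\ge 2$. This mapping cone is called the trimming complex. *)

theory Defs
  imports Main "HOL-Library.Poly_Mapping" "HOL-Library.Function_Algebras"
begin

text \<open>Polynomials over the field 'k in the finitely many variables indexed by the
finite type 'v (so n = CARD('v)): finitely supported maps from monomials
(exponent vectors 'v =>0 nat) to coefficients.\<close>

type_synonym ('v, 'k) poly_ring = "('v \<Rightarrow>\<^sub>0 nat) \<Rightarrow>\<^sub>0 'k"

definition mon_deg :: "('v \<Rightarrow>\<^sub>0 nat) \<Rightarrow> nat" where
  "mon_deg m = (\<Sum>v\<in>Poly_Mapping.keys m. Poly_Mapping.lookup m v)"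

text \<open>Homogeneous of (standard) degree d; the zero polynomial is homogeneous of every degree.\<close>
definition homog :: "int \<Rightarrow> ('v, 'k::zero) poly_ring \<Rightarrow> bool" where
  "homog d p \<longleftrightarrow> (\<forall>m\<in>Poly_Mapping.keys p. int (mon_deg m) = d)"

definition is_ideal :: "'a::comm_ring_1 set \<Rightarrow> bool" where
  "is_ideal I \<longleftrightarrow> 0 \<in> I \<and> (\<forall>a\<in>I. \<forall>b\<in>I. a + b \<in> I) \<and> (\<forall>r. \<forall>a\<in>I. r * a \<in> I)"

definition ideal_gen :: "'a::comm_ring_1 set \<Rightarrow> 'a set" where
  "ideal_gen S = \<Inter>{J. is_ideal J \<and> S \<subseteq> J}"

definition ideal_sum :: "'a::comm_ring_1 set \<Rightarrow> 'a set \<Rightarrow> 'a set" where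
  "ideal_sum A B = {a + b | a b. a \<in> A \<and> b \<in> B}"

definition ideal_prod :: "'a::comm_ring_1 set \<Rightarrow> 'a set \<Rightarrow> 'a set" where
  "ideal_prod A B = ideal_gen {a * b | a b. a \<in> A \<and> b \<in> B}"

definition homog_ideal :: "('v, 'k::field) poly_ring set \<Rightarrow> bool" where
  "homog_ideal I \<longleftrightarrow> is_ideal I \<and> I = ideal_gen {p \<in> I. \<exists>d. homog d p}"

text \<open>The free module with basis indexed by the set B: finitely supported coordinate
vectors vanishing outside B.\<close>
definition fmod :: "'b set \<Rightarrow> ('b \<Rightarrow> 'a::comm_ring_1) set" where
  "fmod B = {x. finite {j. x j \<noteq> 0} \<and> (\<forall>j. j \<notin> B \<longrightarrow> x j = 0)}"

definition smult_vec :: "'a::comm_ring_1 \<Rightarrow> ('b \<Rightarrow> 'a) \<Rightarrow> ('b \<Rightarrow> 'a)" where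
  "smult_vec r x = (\<lambda>j. r * x j)"

definition basis_vec :: "'b \<Rightarrow> ('b \<Rightarrow> 'a::comm_ring_1)" where
  "basis_vec j = (\<lambda>i. if i = j then 1 else 0)"

definition lin_map :: "'b set \<Rightarrow> 'c set \<Rightarrow> (('b \<Rightarrow> 'a::comm_ring_1) \<Rightarrow> ('c \<Rightarrow> 'a)) \<Rightarrow> bool" where
  "lin_map B C f \<longleftrightarrow> (\<forall>x\<in>fmod B. f x \<in> fmod C)
     \<and> (\<forall>x\<in>fmod B. \<forall>y\<in>fmod B. f (x + y) = f x + f y)
     \<and> (\<forall>r. \<forall>x\<in>fmod B. f (smult_vec r x) = smult_vec r (f x))"

text \<open>Graded free modules: basis element j has degree (shift) degB j; a map is
homogeneous (of degree 0) if it sends each basis element to a homogeneous element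
of the same degree.\<close>
definition homog_map :: "'b set \<Rightarrow> ('b \<Rightarrow> int) \<Rightarrow> ('c \<Rightarrow> int)
     \<Rightarrow> (('b \<Rightarrow> ('v, 'k::field) poly_ring) \<Rightarrow> ('c \<Rightarrow> ('v, 'k) poly_ring)) \<Rightarrow> bool" where
  "homog_map B degB degC f \<longleftrightarrow>
     (\<forall>j\<in>B. \<forall>i. homog (degB j - degC i) (f (basis_vec j) i))"

definition is_complex :: "(nat \<Rightarrow> 'b set) \<Rightarrow> (nat \<Rightarrow> ('b \<Rightarrow> 'a::comm_ring_1) \<Rightarrow> ('b \<Rightarrow> 'a)) \<Rightarrow> bool" where
  "is_complex Bs d \<longleftrightarrow> (\<forall>j\<ge>1. lin_map (Bs j) (Bs (j - 1)) (d j))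
     \<and> (\<forall>j\<ge>2. \<forall>x\<in>fmod (Bs j). d (j - 1) (d j x) = 0)"

definition exact_at :: "(nat \<Rightarrow> 'b set) \<Rightarrow> (nat \<Rightarrow> ('b \<Rightarrow> 'a::comm_ring_1) \<Rightarrow> ('b \<Rightarrow> 'a)) \<Rightarrow> nat \<Rightarrow> bool" where
  "exact_at Bs d j \<longleftrightarrow> {x \<in> fmod (Bs j). d j x = 0} = d (Suc j) ` fmod (Bs (Suc j))"

text \<open>(Bs, d) is a free resolution of R/I with C_0 = R: C_0 is free of rank one on the
basis element z, the complex is exact in all degrees >= 1 and the image of d_1 in
C_0 = R is I (so the cokernel of d_1 is R/I).\<close>
definition free_res_quot :: "'a::comm_ring_1 set \<Rightarrow> (nat \<Rightarrow> 'b set) \<Rightarrow> (nat \<Rightarrow> ('b \<Rightarrow> 'a) \<Rightarrow> ('b \<Rightarrow> 'a)) \<Rightarrow> bool" where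
  "free_res_quot I Bs d \<longleftrightarrow> is_complex Bs d
     \<and> (\<exists>z. Bs 0 = {z} \<and> (\<lambda>x. d 1 x z) ` fmod (Bs 1) = I)
     \<and> (\<forall>j\<ge>1. exact_at Bs d j)"

definition homog_free_res_quot :: "('v, 'k::field) poly_ring set \<Rightarrow> (nat \<Rightarrow> 'b set) \<Rightarrow> (nat \<Rightarrow> 'b \<Rightarrow> int)
     \<Rightarrow> (nat \<Rightarrow> ('b \<Rightarrow> ('v, 'k) poly_ring) \<Rightarrow> ('b \<Rightarrow> ('v, 'k) poly_ring)) \<Rightarrow> bool" where
  "homog_free_res_quot I Bs dg d \<longleftrightarrow> free_res_quot I Bs d
     \<and> (\<forall>z\<in>Bs 0. dg 0 z = 0)
     \<and> (\<forall>j\<ge>1. homog_map (Bs j) (dg j) (dg (j - 1)) (d j))"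

definition chain_map :: "(nat \<Rightarrow> 'b set) \<Rightarrow> (nat \<Rightarrow> ('b \<Rightarrow> 'a::comm_ring_1) \<Rightarrow> ('b \<Rightarrow> 'a))
     \<Rightarrow> (nat \<Rightarrow> 'c set) \<Rightarrow> (nat \<Rightarrow> ('c \<Rightarrow> 'a) \<Rightarrow> ('c \<Rightarrow> 'a))
     \<Rightarrow> (nat \<Rightarrow> ('b \<Rightarrow> 'a) \<Rightarrow> ('c \<Rightarrow> 'a)) \<Rightarrow> bool" where
  "chain_map BC dC BD dD phi \<longleftrightarrow> (\<forall>j. lin_map (BC j) (BD j) (phi j))
     \<and> (\<forall>j\<ge>1. \<forall>x\<in>fmod (BC j). dD j (phi j x) = phi (j - 1) (dC j x))"

text \<open>Mapping cone of phi : C -> D: Cone_0 = D_0, Cone_j = C_(j-1) (+) D_j for j >= 1,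
with differential (t, b) |-> (- dC_(j-1) t, phi_(j-1) t + dD_j b), where dC_0 = 0.\<close>
definition cone_basis :: "(nat \<Rightarrow> 'b set) \<Rightarrow> (nat \<Rightarrow> 'c set) \<Rightarrow> nat \<Rightarrow> ('b + 'c) set" where
  "cone_basis BC BD j = (if j = 0 then Inr ` BD 0 else Inl ` BC (j - 1) \<union> Inr ` BD j)"

definition cone_diff :: "(nat \<Rightarrow> ('b \<Rightarrow> 'a::comm_ring_1) \<Rightarrow> ('b \<Rightarrow> 'a))
     \<Rightarrow> (nat \<Rightarrow> ('c \<Rightarrow> 'a) \<Rightarrow> ('c \<Rightarrow> 'a)) \<Rightarrow> (nat \<Rightarrow> ('b \<Rightarrow> 'a) \<Rightarrow> ('c \<Rightarrow> 'a))
     \<Rightarrow> nat \<Rightarrow> (('b + 'c) \<Rightarrow> 'a) \<Rightarrow> (('b + 'c) \<Rightarrow> 'a)" where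
  "cone_diff dC dD phi j x = (\<lambda>s. case s of
       Inl i \<Rightarrow> (if j \<le> 1 then 0 else - dC (j - 1) (x \<circ> Inl) i)
     | Inr k \<Rightarrow> (if j = 0 then 0 else phi (j - 1) (x \<circ> Inl) k + dD j (x \<circ> Inr) k))"

text \<open>Data: resolution F with basis sets BF, differentials d, chosen basis element
e0 of F_1 (so F_1' is spanned by the other basis elements), the basis element zF of
F_0 = R; resolution G with basis sets BG, differentials m, zG the basis element of G_0 = R.\<close>

text \<open>T: T_0 = F_1', T_j = F_(j+1); differential T_1 = F_2 -> F_1' is d_2' (d_2 followed
by the projection onto F_1'), and T_j -> T_(j-1) is d_(j+1) for j >= 2.\<close>
definition T_basis :: "(nat \<Rightarrow> 'b set) \<Rightarrow> 'b \<Rightarrow> nat \<Rightarrow> 'b set" where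
  "T_basis BF e0 j = (if j = 0 then BF 1 - {e0} else BF (Suc j))"

definition T_diff :: "(nat \<Rightarrow> ('b \<Rightarrow> 'a::comm_ring_1) \<Rightarrow> ('b \<Rightarrow> 'a)) \<Rightarrow> 'b
     \<Rightarrow> nat \<Rightarrow> ('b \<Rightarrow> 'a) \<Rightarrow> ('b \<Rightarrow> 'a)" where
  "T_diff d e0 j x = (if j = 1 then (d 2 x)(e0 := 0) else d (Suc j) x)"

definition B_diff :: "(nat \<Rightarrow> ('b \<Rightarrow> 'a::comm_ring_1) \<Rightarrow> ('b \<Rightarrow> 'a)) \<Rightarrow> 'b \<Rightarrow> 'b
     \<Rightarrow> (nat \<Rightarrow> ('c \<Rightarrow> 'a) \<Rightarrow> ('c \<Rightarrow> 'a)) \<Rightarrow> nat \<Rightarrow> ('c \<Rightarrow> 'a) \<Rightarrow> ('c \<Rightarrow> 'a)" where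
  "B_diff d e0 zF m j g = (if j = 1 then (\<lambda>w. - (m 1 g w * d 1 (basis_vec e0) zF)) else m j g)"

text \<open>The maps T -> B: d_1 restricted to F_1' (landing in R = G_0) in degree 0, and
q_(i-1) : F_i -> G_(i-1), i.e. q_j on T_j = F_(j+1), in degrees j >= 1.\<close>
definition TB_map :: "(nat \<Rightarrow> ('b \<Rightarrow> 'a::comm_ring_1) \<Rightarrow> ('b \<Rightarrow> 'a)) \<Rightarrow> 'b \<Rightarrow> 'c
     \<Rightarrow> (nat \<Rightarrow> ('b \<Rightarrow> 'a) \<Rightarrow> ('c \<Rightarrow> 'a)) \<Rightarrow> nat \<Rightarrow> ('b \<Rightarrow> 'a) \<Rightarrow> ('c \<Rightarrow> 'a)" where
  "TB_map d zF zG q j x = (if j = 0 then (\<lambda>w. if w = zG then d 1 x zF else 0) else q j x)"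

end

theory Submission
  imports Defs
begin

text \<open>The trimming complex is the mapping cone of a chain map, so it is a complex.
A cycle (t, b) of the cone is a boundary once t = d s for some s in F (exactness of F)
and b + q s is a boundary in G (it is an m-cycle by the defining property of q;
exactness of G).  In the lowest degree t lies in F_1' only, and one first passes to the
cycle t - a e_0 of F_1 with a = m_1(b); that d_1 kills it is the same identity
d_1 d_2' = - d_0' d_1(e_0), i.e. d_1 d_2 = 0, that makes the maps a chain map.  The image
of the cone differential in R is d_1(F_1') + m_1(G_1) d_1(e_0) = K' + \<aa> K_0 = J.\<close>

subsection \<open>Free modules and linear maps\<close>

lemma fmod_add: "x \<in> fmod B \<Longrightarrow> y \<in> fmod B \<Longrightarrow> x + y \<in> fmod B"
  unfolding fmod_def
  by (auto intro: finite_subset[of _ "{j. x j \<noteq> 0} \<union> {j. y j \<noteq> 0}"])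

lemma fmod_smult_vec: "x \<in> fmod B \<Longrightarrow> smult_vec r x \<in> fmod B"
  unfolding fmod_def smult_vec_def
  by (auto intro: finite_subset[of _ "{j. x j \<noteq> 0}"])

lemma smult_vec_minus_one: "smult_vec (- 1) x = - x"
  by (simp add: smult_vec_def fun_eq_iff)

lemma fmod_uminus: "x \<in> fmod B \<Longrightarrow> - x \<in> fmod B"
  using fmod_smult_vec[of x B "- 1"] by (simp add: smult_vec_minus_one)

lemma fmod_diff: "x \<in> fmod B \<Longrightarrow> y \<in> fmod B \<Longrightarrow> x - y \<in> fmod B"
  using fmod_add[of x B "- y"] fmod_uminus[of y B] by simp

lemma fmod_mono: "A \<subseteq> B \<Longrightarrow> x \<in> fmod A \<Longrightarrow> x \<in> fmod B"
  unfolding fmod_def by auto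

lemma fmod_outside: "x \<in> fmod B \<Longrightarrow> j \<notin> B \<Longrightarrow> x j = 0"
  unfolding fmod_def by auto

lemma fmod_fun_upd_zero: "x \<in> fmod B \<Longrightarrow> x(e := 0) \<in> fmod (B - {e})"
  unfolding fmod_def by (auto intro: finite_subset[of _ "{j. x j \<noteq> 0}"])

lemma fmod_singleton_eq_zero: "v \<in> fmod {z} \<Longrightarrow> v z = 0 \<Longrightarrow> v = 0"
  unfolding fmod_def by (auto simp: fun_eq_iff)

lemma basis_vec_in_fmod: "j \<in> B \<Longrightarrow> basis_vec j \<in> fmod B"
  unfolding fmod_def basis_vec_def by auto

lemma fmod_empty: "x \<in> fmod {} \<longleftrightarrow> x = 0"
  by (auto simp: fmod_def fun_eq_iff)

lemma fmod_Inl_Inr_iff: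
  "x \<in> fmod (Inl ` A \<union> Inr ` B) \<longleftrightarrow> x \<circ> Inl \<in> fmod A \<and> x \<circ> Inr \<in> fmod B"
proof
  assume x: "x \<in> fmod (Inl ` A \<union> Inr ` B)"
  then have fin: "finite {j. x j \<noteq> 0}" by (simp add: fmod_def)
  have "finite {i. (x \<circ> Inl) i \<noteq> 0}" "finite {i. (x \<circ> Inr) i \<noteq> 0}"
    using finite_vimageI[OF fin, of Inl] finite_vimageI[OF fin, of Inr] by (simp_all add: vimage_def)
  then show "x \<circ> Inl \<in> fmod A \<and> x \<circ> Inr \<in> fmod B"
    using x by (auto simp: fmod_def)
next
  assume h: "x \<circ> Inl \<in> fmod A \<and> x \<circ> Inr \<in> fmod B"
  have "{j. x j \<noteq> 0} \<subseteq> Inl ` {i. (x \<circ> Inl) i \<noteq> 0} \<union> Inr ` {i. (x \<circ> Inr) i \<noteq> 0}"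
    by (auto simp: image_iff split: sum.split) (metis sum.exhaust)
  then have "finite {j. x j \<noteq> 0}"
    using h by (auto simp: fmod_def intro: finite_subset)
  moreover have "\<forall>j. j \<notin> Inl ` A \<union> Inr ` B \<longrightarrow> x j = 0"
  proof (intro allI impI)
    fix j assume "j \<notin> Inl ` A \<union> Inr ` B"
    then show "x j = 0" using h by (cases j) (auto simp: fmod_def)
  qed
  ultimately show "x \<in> fmod (Inl ` A \<union> Inr ` B)" by (simp add: fmod_def)
qed

lemma lin_mapI:
  "(\<And>x. x \<in> fmod B \<Longrightarrow> f x \<in> fmod C) \<Longrightarrow>
   (\<And>x y. x \<in> fmod B \<Longrightarrow> y \<in> fmod B \<Longrightarrow> f (x + y) = f x + f y) \<Longrightarrow>
   (\<And>r x. x \<in> fmod B \<Longrightarrow> f (smult_vec r x) = smult_vec r (f x)) \<Longrightarrow> lin_map B C f"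
  unfolding lin_map_def by blast

lemma lin_map_in: "lin_map B C f \<Longrightarrow> x \<in> fmod B \<Longrightarrow> f x \<in> fmod C"
  unfolding lin_map_def by auto

lemma lin_map_add: "lin_map B C f \<Longrightarrow> x \<in> fmod B \<Longrightarrow> y \<in> fmod B \<Longrightarrow> f (x + y) = f x + f y"
  unfolding lin_map_def by auto

lemma lin_map_smult_vec:
  "lin_map B C f \<Longrightarrow> x \<in> fmod B \<Longrightarrow> f (smult_vec r x) = smult_vec r (f x)"
  unfolding lin_map_def by auto

lemma lin_map_uminus: "lin_map B C f \<Longrightarrow> x \<in> fmod B \<Longrightarrow> f (- x) = - f x"
  using lin_map_smult_vec[of B C f x "- 1"] by (simp add: smult_vec_minus_one)

lemma lin_map_mono: "lin_map B C f \<Longrightarrow> A \<subseteq> B \<Longrightarrow> lin_map A C f"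
  unfolding lin_map_def using fmod_mono by blast

lemma lin_map_coordinate:
  assumes f: "lin_map B C f"
  shows "lin_map B {z} (\<lambda>x w. if w = z then f x y else 0)"
proof (rule lin_mapI)
  show "(\<lambda>w. if w = z then f x y else 0) \<in> fmod {z}" for x
    unfolding fmod_def by (auto intro: finite_subset[of _ "{z}"])
  show "(\<lambda>w. if w = z then f (smult_vec r x) y else 0) = smult_vec r (\<lambda>w. if w = z then f x y else 0)"
    if "x \<in> fmod B" for r x
    using lin_map_smult_vec[OF f that, of r] by (auto simp: fun_eq_iff smult_vec_def)
qed (auto simp: lin_map_add[OF f])

lemma lin_map_neg_mult_const:
  assumes f: "lin_map B C f"
  shows "lin_map B C (\<lambda>x w. - (f x w * c))"
proof (rule lin_mapI)
  show "(\<lambda>w. - (f x w * c)) \<in> fmod C" if "x \<in> fmod B" for x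
    using lin_map_in[OF f that] unfolding fmod_def
    by (auto intro: finite_subset[of _ "{w. f x w \<noteq> 0}"])
qed (auto simp: lin_map_add[OF f] lin_map_smult_vec[OF f], auto simp: smult_vec_def algebra_simps)

lemma lin_map_fun_upd_zero:
  assumes f: "lin_map B C f"
  shows "lin_map B (C - {e}) (\<lambda>x. (f x)(e := 0))"
proof (rule lin_mapI)
  show "(f x)(e := 0) \<in> fmod (C - {e})" if "x \<in> fmod B" for x
    using fmod_fun_upd_zero[OF lin_map_in[OF f that]] .
qed (auto simp: lin_map_add[OF f] lin_map_smult_vec[OF f], auto simp: smult_vec_def fun_eq_iff)

subsection \<open>Complexes, chain maps and mapping cones\<close>

lemma is_complexI:
  assumes "\<And>j. lin_map (B (Suc j)) (B j) (d (Suc j))"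
    and "\<And>j x. x \<in> fmod (B (Suc (Suc j))) \<Longrightarrow> d (Suc j) (d (Suc (Suc j)) x) = 0"
  shows "is_complex B d"
  unfolding is_complex_def
proof (intro conjI allI impI ballI)
  show "lin_map (B j) (B (j - 1)) (d j)" if "1 \<le> j" for j
    using assms(1)[of "j - 1"] that by simp
  show "d (j - 1) (d j x) = 0" if "2 \<le> j" "x \<in> fmod (B j)" for j x
    using assms(2)[of x "j - 2"] that by (simp add: numeral_2_eq_2 Suc_diff_Suc)
qed

lemma is_complex_lin_map:
  assumes "is_complex B d"
  shows "lin_map (B (Suc j)) (B j) (d (Suc j))"
  using assms[unfolded is_complex_def] by (auto dest: spec[of _ "Suc j"])

lemma is_complex_comp_zero:
  "is_complex B d \<Longrightarrow> x \<in> fmod (B (Suc (Suc j))) \<Longrightarrow> d (Suc j) (d (Suc (Suc j)) x) = 0"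
  unfolding is_complex_def by (auto dest!: spec[of _ "Suc (Suc j)"])

lemma chain_mapI:
  assumes "\<And>j. lin_map (BC j) (BD j) (phi j)"
    and "\<And>j x. x \<in> fmod (BC (Suc j)) \<Longrightarrow> dD (Suc j) (phi (Suc j) x) = phi j (dC (Suc j) x)"
  shows "chain_map BC dC BD dD phi"
  unfolding chain_map_def
proof (intro conjI allI impI ballI)
  show "dD j (phi j x) = phi (j - 1) (dC j x)" if "1 \<le> j" "x \<in> fmod (BC j)" for j x
    using assms(2)[of x "j - 1"] that by simp
qed (rule assms(1))

lemma exact_atD:
  "exact_at B d j \<Longrightarrow> x \<in> fmod (B j) \<Longrightarrow> d j x = 0 \<Longrightarrow> \<exists>s\<in>fmod (B (Suc j)). x = d (Suc j) s"
  unfolding exact_at_def by blast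

lemma fmod_cone_basis_Suc:
  "x \<in> fmod (cone_basis BC BD (Suc i)) \<longleftrightarrow> x \<circ> Inl \<in> fmod (BC i) \<and> x \<circ> Inr \<in> fmod (BD (Suc i))"
  by (simp add: cone_basis_def fmod_Inl_Inr_iff)

lemma fmod_cone_basis_0:
  "x \<in> fmod (cone_basis BC BD 0) \<longleftrightarrow> x \<circ> Inl = 0 \<and> x \<circ> Inr \<in> fmod (BD 0)"
  using fmod_Inl_Inr_iff[of x "{}" "BD 0"] by (simp add: cone_basis_def fmod_empty)

lemma cone_diff_Suc:
  "cone_diff dC dD phi (Suc i) x =
     case_sum (if i = 0 then 0 else - dC i (x \<circ> Inl)) (phi i (x \<circ> Inl) + dD (Suc i) (x \<circ> Inr))"
  by (auto simp: cone_diff_def fun_eq_iff split: sum.split)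

lemma plus_fun_comp: "(x + y) \<circ> f = (x \<circ> f) + (y \<circ> f)"
  by (simp add: fun_eq_iff)

lemma smult_vec_comp: "smult_vec r x \<circ> f = smult_vec r (x \<circ> f)"
  by (simp add: fun_eq_iff smult_vec_def)

lemma lin_map_cone_diff:
  fixes phi :: "nat \<Rightarrow> ('b \<Rightarrow> 'a::comm_ring_1) \<Rightarrow> ('c \<Rightarrow> 'a)"
  assumes C: "is_complex BC dC" and D: "is_complex BD dD" and phi: "chain_map BC dC BD dD phi"
  shows "lin_map (cone_basis BC BD (Suc i)) (cone_basis BC BD i) (cone_diff dC dD phi (Suc i))"
proof (rule lin_mapI)
  note dC = is_complex_lin_map[OF C] and dD = is_complex_lin_map[OF D]
  have phi_i: "lin_map (BC i) (BD i) (phi i)"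
    using phi by (simp add: chain_map_def)
  fix x :: "'b + 'c \<Rightarrow> 'a" assume x: "x \<in> fmod (cone_basis BC BD (Suc i))"
  then have t: "x \<circ> Inl \<in> fmod (BC i)" and b: "x \<circ> Inr \<in> fmod (BD (Suc i))"
    by (simp_all add: fmod_cone_basis_Suc)
  have right: "phi i (x \<circ> Inl) + dD (Suc i) (x \<circ> Inr) \<in> fmod (BD i)"
    by (rule fmod_add[OF lin_map_in[OF phi_i t] lin_map_in[OF dD b]])
  show "cone_diff dC dD phi (Suc i) x \<in> fmod (cone_basis BC BD i)"
  proof (cases i)
    case 0
    then show ?thesis using right by (simp add: cone_diff_Suc fmod_cone_basis_0 case_sum_o_inj)
  next
    case (Suc k)
    then show ?thesis
      using right fmod_uminus[OF lin_map_in[OF dC, of "x \<circ> Inl" k]] t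
      by (simp add: cone_diff_Suc fmod_cone_basis_Suc case_sum_o_inj)
  qed
  {
    fix y :: "'b + 'c \<Rightarrow> 'a" assume y: "y \<in> fmod (cone_basis BC BD (Suc i))"
    then have t': "y \<circ> Inl \<in> fmod (BC i)" and b': "y \<circ> Inr \<in> fmod (BD (Suc i))"
      by (simp_all add: fmod_cone_basis_Suc)
    show "cone_diff dC dD phi (Suc i) (x + y) = cone_diff dC dD phi (Suc i) x + cone_diff dC dD phi (Suc i) y"
      using lin_map_add[OF phi_i t t'] lin_map_add[OF dD b b'] lin_map_add[OF dC, of "x \<circ> Inl" "i - 1" "y \<circ> Inl"] t t'
      by (cases i) (auto simp: cone_diff_Suc plus_fun_comp fun_eq_iff split: sum.split)
  }
  show "cone_diff dC dD phi (Suc i) (smult_vec r x) = smult_vec r (cone_diff dC dD phi (Suc i) x)" for r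
    using lin_map_smult_vec[OF phi_i t] lin_map_smult_vec[OF dD b] lin_map_smult_vec[OF dC, of "x \<circ> Inl" "i - 1"] t
    by (cases i) (simp_all add: cone_diff_Suc smult_vec_comp,
        auto simp: fun_eq_iff smult_vec_def algebra_simps split: sum.split)
qed

lemma cone_diff_comp_zero:
  assumes C: "is_complex BC dC" and D: "is_complex BD dD" and phi: "chain_map BC dC BD dD phi"
    and x: "x \<in> fmod (cone_basis BC BD (Suc (Suc i)))"
  shows "cone_diff dC dD phi (Suc i) (cone_diff dC dD phi (Suc (Suc i)) x) = 0"
proof -
  define t b where "t = x \<circ> Inl" and "b = x \<circ> Inr"
  have t: "t \<in> fmod (BC (Suc i))" and b: "b \<in> fmod (BD (Suc (Suc i)))"
    using x by (simp_all add: t_def b_def fmod_cone_basis_Suc)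
  have dt: "dC (Suc i) t \<in> fmod (BC i)"
    using lin_map_in[OF is_complex_lin_map[OF C] t] .
  have phi_lin: "\<And>j. lin_map (BC j) (BD j) (phi j)"
    and phi_comm: "\<And>j x. j \<ge> 1 \<Longrightarrow> x \<in> fmod (BC j) \<Longrightarrow> dD j (phi j x) = phi (j - 1) (dC j x)"
    using phi by (simp_all add: chain_map_def)
  have left: "(if i = 0 then 0 else - dC i (- dC (Suc i) t)) = 0"
  proof (cases i)
    case (Suc k)
    then have "dC i (- dC (Suc i) t) = - dC i (dC (Suc i) t)"
      using lin_map_uminus[OF is_complex_lin_map[OF C, of k]] dt by simp
    then show ?thesis
      using is_complex_comp_zero[OF C, of t k] t Suc by simp
  qed simp
  have "dD (Suc i) (phi (Suc i) t + dD (Suc (Suc i)) b) = phi i (dC (Suc i) t)"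
    using lin_map_add[OF is_complex_lin_map[OF D] lin_map_in[OF phi_lin t] lin_map_in[OF is_complex_lin_map[OF D] b]]
      phi_comm[of "Suc i" t] is_complex_comp_zero[OF D b] t by simp
  then have right: "phi i (- dC (Suc i) t) + dD (Suc i) (phi (Suc i) t + dD (Suc (Suc i)) b) = 0"
    using lin_map_uminus[OF phi_lin dt] by simp
  have "cone_diff dC dD phi (Suc (Suc i)) x = case_sum (- dC (Suc i) t) (phi (Suc i) t + dD (Suc (Suc i)) b)"
    by (simp add: cone_diff_Suc t_def b_def)
  then have "cone_diff dC dD phi (Suc i) (cone_diff dC dD phi (Suc (Suc i)) x)
      = case_sum (if i = 0 then 0 else - dC i (- dC (Suc i) t))
          (phi i (- dC (Suc i) t) + dD (Suc i) (phi (Suc i) t + dD (Suc (Suc i)) b))"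
    by (simp add: cone_diff_Suc[of _ _ _ i] case_sum_o_inj)
  also have "\<dots> = 0"
    unfolding left right by (simp add: fun_eq_iff split: sum.split)
  finally show ?thesis .
qed

lemma is_complex_cone:
  assumes "is_complex BC dC" "is_complex BD dD" "chain_map BC dC BD dD phi"
  shows "is_complex (cone_basis BC BD) (cone_diff dC dD phi)"
  using lin_map_cone_diff[OF assms] cone_diff_comp_zero[OF assms] by (rule is_complexI)

lemma exact_at_cone_SucI:
  assumes cone: "is_complex (cone_basis BC BD) (cone_diff dC dD phi)"
    and lift: "\<And>t b. t \<in> fmod (BC i) \<Longrightarrow> b \<in> fmod (BD (Suc i)) \<Longrightarrow> (i \<ge> 1 \<longrightarrow> dC i t = 0) \<Longrightarrow>
         phi i t + dD (Suc i) b = 0 \<Longrightarrow>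
         \<exists>t'\<in>fmod (BC (Suc i)). \<exists>b'\<in>fmod (BD (Suc (Suc i))).
           - dC (Suc i) t' = t \<and> phi (Suc i) t' + dD (Suc (Suc i)) b' = b"
  shows "exact_at (cone_basis BC BD) (cone_diff dC dD phi) (Suc i)"
  unfolding exact_at_def
proof (intro equalityI subsetI)
  fix x assume "x \<in> {x \<in> fmod (cone_basis BC BD (Suc i)). cone_diff dC dD phi (Suc i) x = 0}"
  then have x: "x \<in> fmod (cone_basis BC BD (Suc i))" and cycle: "cone_diff dC dD phi (Suc i) x = 0"
    by auto
  have t: "x \<circ> Inl \<in> fmod (BC i)" and b: "x \<circ> Inr \<in> fmod (BD (Suc i))"
    using x by (simp_all add: fmod_cone_basis_Suc)
  have "i \<ge> 1 \<longrightarrow> dC i (x \<circ> Inl) = 0" and "phi i (x \<circ> Inl) + dD (Suc i) (x \<circ> Inr) = 0"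
    using cycle[unfolded cone_diff_Suc] by (auto simp: fun_eq_iff split: if_splits dest: spec[of _ "Inl _"] spec[of _ "Inr _"])
  then obtain t' b' where t': "t' \<in> fmod (BC (Suc i))" and b': "b' \<in> fmod (BD (Suc (Suc i)))"
    and "- dC (Suc i) t' = x \<circ> Inl" and "phi (Suc i) t' + dD (Suc (Suc i)) b' = x \<circ> Inr"
    using lift[OF t b] by blast
  then have "cone_diff dC dD phi (Suc (Suc i)) (case_sum t' b') = x"
    by (simp add: cone_diff_Suc case_sum_o_inj case_sum_expand_Inr_pointfree)
  moreover have "case_sum t' b' \<in> fmod (cone_basis BC BD (Suc (Suc i)))"
    using t' b' by (simp add: fmod_cone_basis_Suc case_sum_o_inj)
  ultimately show "x \<in> cone_diff dC dD phi (Suc (Suc i)) ` fmod (cone_basis BC BD (Suc (Suc i)))"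
    by blast
next
  fix y assume "y \<in> cone_diff dC dD phi (Suc (Suc i)) ` fmod (cone_basis BC BD (Suc (Suc i)))"
  then show "y \<in> {x \<in> fmod (cone_basis BC BD (Suc i)). cone_diff dC dD phi (Suc i) x = 0}"
    using lin_map_in[OF is_complex_lin_map[OF cone]] is_complex_comp_zero[OF cone] by auto
qed

subsection \<open>Principal ideals\<close>

lemma ideal_gen_eqI:
  assumes "is_ideal P" "S \<subseteq> P" "\<And>J. is_ideal J \<Longrightarrow> S \<subseteq> J \<Longrightarrow> P \<subseteq> J"
  shows "ideal_gen S = P"
  using assms unfolding ideal_gen_def by blast

lemma is_ideal_mult_right:
  assumes A: "is_ideal (A::'a::comm_ring_1 set)"
  shows "is_ideal {a * c | a. a \<in> A}"
  unfolding is_ideal_def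
proof (intro conjI ballI allI)
  show "0 \<in> {a * c | a. a \<in> A}"
    using A by (auto simp: is_ideal_def intro!: exI[of _ 0])
next
  fix x y assume "x \<in> {a * c | a. a \<in> A}" "y \<in> {a * c | a. a \<in> A}"
  then obtain a b where "x = a * c" "y = b * c" "a \<in> A" "b \<in> A" by auto
  then show "x + y \<in> {a * c | a. a \<in> A}"
    using A by (auto simp: is_ideal_def distrib_right intro!: exI[of _ "a + b"])
next
  fix r x assume "x \<in> {a * c | a. a \<in> A}"
  then obtain a where "x = a * c" "a \<in> A" by auto
  then show "r * x \<in> {a * c | a. a \<in> A}"
    using A by (auto simp: is_ideal_def mult.assoc intro!: exI[of _ "r * a"])
qed

lemma ideal_gen_singleton: "ideal_gen {c::'a::comm_ring_1} = {r * c | r. True}"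
proof (rule ideal_gen_eqI)
  show "is_ideal {r * c | r. True}"
    using is_ideal_mult_right[of UNIV c] by (simp add: is_ideal_def)
  show "{c} \<subseteq> {r * c | r. True}"
    by (auto intro: exI[of _ 1])
qed (auto simp: is_ideal_def)

lemma ideal_prod_principal:
  assumes A: "is_ideal (A::'a::comm_ring_1 set)"
  shows "ideal_prod A (ideal_gen {c}) = {a * c | a. a \<in> A}"
  unfolding ideal_prod_def ideal_gen_singleton
proof (rule ideal_gen_eqI[OF is_ideal_mult_right[OF A]])
  show "{a * b | a b. a \<in> A \<and> b \<in> {r * c | r. True}} \<subseteq> {a * c | a. a \<in> A}"
  proof
    fix x assume "x \<in> {a * b | a b. a \<in> A \<and> b \<in> {r * c | r. True}}"
    then obtain a r where "x = a * (r * c)" "a \<in> A" by auto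
    then have "x = (r * a) * c" by (simp add: ac_simps)
    moreover have "r * a \<in> A" using A \<open>a \<in> A\<close> by (simp add: is_ideal_def)
    ultimately show "x \<in> {a * c | a. a \<in> A}" by blast
  qed
  fix J assume J: "{a * b | a b. a \<in> A \<and> b \<in> {r * c | r. True}} \<subseteq> J"
  show "{a * c | a. a \<in> A} \<subseteq> J"
  proof
    fix x assume "x \<in> {a * c | a. a \<in> A}"
    then obtain a where "x = a * (1 * c)" "a \<in> A" by auto
    then show "x \<in> J" using J by blast
  qed
qed

subsection \<open>The trimming complex\<close>

lemma T_basis_0 [simp]: "T_basis BF e0 0 = BF 1 - {e0}"
  and T_basis_Suc [simp]: "T_basis BF e0 (Suc j) = BF (Suc (Suc j))"
  by (simp_all add: T_basis_def)

lemma T_diff_1 [simp]: "T_diff d e0 (Suc 0) = (\<lambda>x. (d (Suc (Suc 0)) x)(e0 := 0))"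
  and T_diff_Suc_Suc [simp]: "T_diff d e0 (Suc (Suc j)) = d (Suc (Suc (Suc j)))"
  by (simp_all add: T_diff_def fun_eq_iff numeral_2_eq_2)

lemma B_diff_1 [simp]: "B_diff d e0 zF m (Suc 0) = (\<lambda>g w. - (m 1 g w * d 1 (basis_vec e0) zF))"
  and B_diff_Suc_Suc [simp]: "B_diff d e0 zF m (Suc (Suc j)) = m (Suc (Suc j))"
  by (simp_all add: B_diff_def fun_eq_iff)

lemma TB_map_0 [simp]: "TB_map d zF zG q 0 = (\<lambda>x w. if w = zG then d 1 x zF else 0)"
  and TB_map_Suc [simp]: "TB_map d zF zG q (Suc j) = q (Suc j)"
  by (simp_all add: TB_map_def fun_eq_iff)

locale trimming =
  fixes I \<aa> :: "'a::comm_ring_1 set"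
    and BF :: "nat \<Rightarrow> 'b set" and d :: "nat \<Rightarrow> ('b \<Rightarrow> 'a) \<Rightarrow> ('b \<Rightarrow> 'a)" and zF e0 :: 'b
    and BG :: "nat \<Rightarrow> 'c set" and m :: "nat \<Rightarrow> ('c \<Rightarrow> 'a) \<Rightarrow> ('c \<Rightarrow> 'a)" and zG :: 'c
    and q :: "nat \<Rightarrow> ('b \<Rightarrow> 'a) \<Rightarrow> ('c \<Rightarrow> 'a)"
  assumes F_res: "free_res_quot I BF d" and F0: "BF 0 = {zF}" and e0: "e0 \<in> BF 1"
    and a_ideal: "is_ideal \<aa>" and G_res: "free_res_quot \<aa> BG m" and G0: "BG 0 = {zG}"
    and q_lin: "\<And>k. lin_map (BF (Suc (Suc k))) (BG (Suc k)) (q (Suc k))"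
    and q_1: "\<And>x. x \<in> fmod (BF 2) \<Longrightarrow> m 1 (q 1 x) = (\<lambda>w. if w = zG then d 2 x e0 else 0)"
    and q_Suc: "\<And>k x. x \<in> fmod (BF (Suc (Suc (Suc k)))) \<Longrightarrow>
               m (Suc (Suc k)) (q (Suc (Suc k)) x) = q (Suc k) (d (Suc (Suc (Suc k))) x)"
begin

lemma F_complex: "is_complex BF d" and F_exact: "j \<ge> 1 \<Longrightarrow> exact_at BF d j"
  using F_res unfolding free_res_quot_def by blast+

lemma G_complex: "is_complex BG m" and G_exact: "j \<ge> 1 \<Longrightarrow> exact_at BG m j"
  using G_res unfolding free_res_quot_def by blast+

lemma G_image: "(\<lambda>x. m 1 x zG) ` fmod (BG 1) = \<aa>"
  using G_res G0 unfolding free_res_quot_def by (metis singleton_inject)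

lemma d_1_lin: "lin_map (BF 1) (BF 0) (d 1)"
  using is_complex_lin_map[OF F_complex, of 0] by simp

lemma m_1_lin: "lin_map (BG 1) (BG 0) (m 1)"
  using is_complex_lin_map[OF G_complex, of 0] by simp

lemma d_2_lin: "lin_map (BF 2) (BF 1) (d 2)"
  using is_complex_lin_map[OF F_complex, of 1] by (simp add: numeral_2_eq_2)

lemma q_1_lin: "lin_map (BF 2) (BG 1) (q 1)"
  using q_lin[of 0] by (simp add: numeral_2_eq_2)

lemma d_1_split:
  assumes y: "y \<in> fmod (BF 1)"
  shows "d 1 y zF = d 1 (y(e0 := 0)) zF + y e0 * d 1 (basis_vec e0) zF"
proof -
  have y': "y(e0 := 0) \<in> fmod (BF 1)"
    using fmod_mono[OF _ fmod_fun_upd_zero[OF y]] by blast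
  have e: "basis_vec e0 \<in> fmod (BF 1)"
    using basis_vec_in_fmod[OF e0] .
  have "y = y(e0 := 0) + smult_vec (y e0) (basis_vec e0)"
    by (simp add: fun_eq_iff smult_vec_def basis_vec_def)
  then have "d 1 y = d 1 (y(e0 := 0)) + smult_vec (y e0) (d 1 (basis_vec e0))"
    using lin_map_add[OF d_1_lin y' fmod_smult_vec[OF e]] lin_map_smult_vec[OF d_1_lin e] by metis
  then show ?thesis
    by (simp add: smult_vec_def)
qed

lemma T_complex: "is_complex (T_basis BF e0) (T_diff d e0)"
proof (rule is_complexI)
  show "lin_map (T_basis BF e0 (Suc j)) (T_basis BF e0 j) (T_diff d e0 (Suc j))" for j
    using lin_map_fun_upd_zero[OF is_complex_lin_map[OF F_complex, of 1], of e0]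
      is_complex_lin_map[OF F_complex, of "Suc j"]
    by (cases j) simp_all
  show "T_diff d e0 (Suc j) (T_diff d e0 (Suc (Suc j)) x) = 0"
    if "x \<in> fmod (T_basis BF e0 (Suc (Suc j)))" for j x
    using that is_complex_comp_zero[OF F_complex, of x "Suc j"]
    by (cases j) (simp_all add: fun_eq_iff)
qed

lemma B_complex: "is_complex BG (B_diff d e0 zF m)"
proof (rule is_complexI)
  show "lin_map (BG (Suc j)) (BG j) (B_diff d e0 zF m (Suc j))" for j
    using lin_map_neg_mult_const[OF m_1_lin]
      is_complex_lin_map[OF G_complex, of j]
    by (cases j) (simp_all add: fun_eq_iff)
  show "B_diff d e0 zF m (Suc j) (B_diff d e0 zF m (Suc (Suc j)) x) = 0"
    if "x \<in> fmod (BG (Suc (Suc j)))" for j x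
    using that is_complex_comp_zero[OF G_complex, of x j]
    by (cases j) (simp_all add: fun_eq_iff)
qed

lemma TB_chain_map: "chain_map (T_basis BF e0) (T_diff d e0) BG (B_diff d e0 zF m) (TB_map d zF zG q)"
proof (rule chain_mapI)
  show "lin_map (T_basis BF e0 j) (BG j) (TB_map d zF zG q j)" for j
  proof (cases j)
    case 0
    have "lin_map (BF 1 - {e0}) (BF 0) (d 1)"
      using lin_map_mono[OF d_1_lin] by blast
    from lin_map_coordinate[OF this, of zG zF] show ?thesis
      using 0 G0 by (simp add: fun_eq_iff)
  qed (simp add: q_lin)
  fix j and x :: "'b \<Rightarrow> 'a" assume x: "x \<in> fmod (T_basis BF e0 (Suc j))"
  show "B_diff d e0 zF m (Suc j) (TB_map d zF zG q (Suc j) x) = TB_map d zF zG q j (T_diff d e0 (Suc j) x)"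
  proof (cases j)
    case 0
    define y where "y = d (Suc (Suc 0)) x"
    have y: "y \<in> fmod (BF 1)" and "d 1 y = 0"
      using x 0 lin_map_in[OF is_complex_lin_map[OF F_complex]] is_complex_comp_zero[OF F_complex]
      by (simp_all add: y_def)
    then have "d 1 (y(e0 := 0)) zF = - (y e0 * d 1 (basis_vec e0) zF)"
      using d_1_split[OF y] by (simp add: eq_neg_iff_add_eq_0)
    then show ?thesis
      using 0 q_1 x by (auto simp: fun_eq_iff y_def numeral_2_eq_2)
  next
    case (Suc k)
    then show ?thesis using q_Suc x by simp
  qed
qed

lemma cycle_lift_low:
  assumes t: "t \<in> fmod (BF 1 - {e0})" and b: "b \<in> fmod (BG 1)"
    and cycle: "d 1 t zF = m 1 b zG * d 1 (basis_vec e0) zF"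
  shows "\<exists>s\<in>fmod (BF 2). \<exists>b'\<in>fmod (BG 2). (d 2 s)(e0 := 0) = t \<and> m 2 b' = b + q 1 s"
proof -
  define a where "a = m 1 b zG"
  define v where "v = t - smult_vec a (basis_vec e0)"
  have t_e0: "t e0 = 0"
    using fmod_outside[OF t] by simp
  have v: "v \<in> fmod (BF 1)"
    unfolding v_def using fmod_mono[OF _ t] fmod_smult_vec[OF basis_vec_in_fmod[OF e0]]
    by (blast intro: fmod_diff)
  have v_upd: "v(e0 := 0) = t" and v_e0: "v e0 = - a"
    using t_e0 by (auto simp: v_def fun_eq_iff smult_vec_def basis_vec_def)
  have "d 1 v zF = 0"
    using d_1_split[OF v] cycle by (simp add: v_upd v_e0 a_def)
  then have "d 1 v = 0"
    using fmod_singleton_eq_zero lin_map_in[OF d_1_lin v] F0 by metis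
  then obtain s where s: "s \<in> fmod (BF 2)" and v_s: "v = d 2 s"
    using exact_atD[OF F_exact v] by (auto simp: numeral_2_eq_2)
  define g where "g = b + q 1 s"
  have q_s: "q 1 s \<in> fmod (BG 1)"
    using lin_map_in[OF q_1_lin s] .
  have g: "g \<in> fmod (BG 1)"
    unfolding g_def using b q_s by (rule fmod_add)
  have "m 1 g zG = 0"
    using lin_map_add[OF m_1_lin b q_s] q_1[OF s] v_s v_e0
    by (simp add: g_def a_def)
  then have "m 1 g = 0"
    using fmod_singleton_eq_zero lin_map_in[OF m_1_lin g] G0 by fastforce
  then obtain b' where "b' \<in> fmod (BG 2)" "g = m 2 b'"
    using exact_atD[OF G_exact g] by (auto simp: numeral_2_eq_2)
  then show ?thesis
    using s v_s v_upd unfolding g_def by metis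
qed

lemma T_cycle_is_F_cycle:
  assumes t: "t \<in> fmod (BF (Suc (Suc k)))" and b: "b \<in> fmod (BG (Suc (Suc k)))"
    and t_cycle: "T_diff d e0 (Suc k) t = 0" and cycle: "q (Suc k) t + m (Suc (Suc k)) b = 0"
  shows "d (Suc (Suc k)) t = 0"
proof (cases k)
  case 0
  then have t2: "t \<in> fmod (BF 2)" and b2: "b \<in> fmod (BG 2)" and "q 1 t = - m 2 b"
    using t b cycle by (simp_all add: numeral_2_eq_2 eq_neg_iff_add_eq_0)
  then have "m 1 (q 1 t) = - m 1 (m 2 b)"
    using lin_map_uminus[OF m_1_lin lin_map_in[OF is_complex_lin_map[OF G_complex, of 1]]]
    by (simp add: numeral_2_eq_2)
  also have "\<dots> = 0"
    using is_complex_comp_zero[OF G_complex, of b 0] b2 by (simp add: numeral_2_eq_2)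
  finally have "d 2 t e0 = 0"
    using fun_cong[OF q_1[OF t2], of zG] by simp
  then show ?thesis
    using t_cycle 0 by (auto simp: fun_eq_iff numeral_2_eq_2 split: if_splits)
next
  case (Suc k')
  then show ?thesis using t_cycle by simp
qed

lemma cycle_lift_high:
  assumes t: "t \<in> fmod (BF (Suc (Suc k)))" and b: "b \<in> fmod (BG (Suc (Suc k)))"
    and t_cycle: "T_diff d e0 (Suc k) t = 0" and cycle: "q (Suc k) t + m (Suc (Suc k)) b = 0"
  shows "\<exists>s\<in>fmod (BF (Suc (Suc (Suc k)))). \<exists>b'\<in>fmod (BG (Suc (Suc (Suc k)))).
           d (Suc (Suc (Suc k))) s = t \<and> m (Suc (Suc (Suc k))) b' = b + q (Suc (Suc k)) s"
proof -
  obtain s where s: "s \<in> fmod (BF (Suc (Suc (Suc k))))" and t_s: "t = d (Suc (Suc (Suc k))) s"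
    using exact_atD[OF F_exact t T_cycle_is_F_cycle[OF assms]] by auto
  define g where "g = b + q (Suc (Suc k)) s"
  have q_s: "q (Suc (Suc k)) s \<in> fmod (BG (Suc (Suc k)))"
    using lin_map_in[OF q_lin s] .
  have g: "g \<in> fmod (BG (Suc (Suc k)))"
    unfolding g_def using b q_s by (rule fmod_add)
  have "m (Suc (Suc k)) g = m (Suc (Suc k)) b + q (Suc k) t"
    unfolding g_def using lin_map_add[OF is_complex_lin_map[OF G_complex] b q_s] q_Suc[OF s] t_s by simp
  then have "m (Suc (Suc k)) g = 0"
    using cycle by (simp add: add.commute)
  then obtain b' where "b' \<in> fmod (BG (Suc (Suc (Suc k))))" "g = m (Suc (Suc (Suc k))) b'"
    using exact_atD[OF G_exact g] by auto
  then show ?thesis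
    using s t_s unfolding g_def by metis
qed

lemma cone_exact:
  assumes "j \<ge> 1"
  shows "exact_at (cone_basis (T_basis BF e0) BG)
           (cone_diff (T_diff d e0) (B_diff d e0 zF m) (TB_map d zF zG q)) j"
proof -
  obtain i where j: "j = Suc i"
    using assms by (cases j) auto
  show ?thesis unfolding j
  proof (rule exact_at_cone_SucI[OF is_complex_cone[OF T_complex B_complex TB_chain_map]])
    fix t b assume t: "t \<in> fmod (T_basis BF e0 i)" and b: "b \<in> fmod (BG (Suc i))"
      and t_cycle: "i \<ge> 1 \<longrightarrow> T_diff d e0 i t = 0"
      and cycle: "TB_map d zF zG q i t + B_diff d e0 zF m (Suc i) b = 0"
    show "\<exists>t'\<in>fmod (T_basis BF e0 (Suc i)). \<exists>b'\<in>fmod (BG (Suc (Suc i))).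
            - T_diff d e0 (Suc i) t' = t \<and> TB_map d zF zG q (Suc i) t' + B_diff d e0 zF m (Suc (Suc i)) b' = b"
    proof (cases i)
      case 0
      have t1: "t \<in> fmod (BF 1 - {e0})" and b1: "b \<in> fmod (BG 1)"
        using t b 0 by simp_all
      have "d 1 t zF = m 1 b zG * d 1 (basis_vec e0) zF"
        using fun_cong[OF cycle, of zG] 0 by simp
      then obtain s b' where s: "s \<in> fmod (BF 2)" and b': "b' \<in> fmod (BG 2)"
        and t_s: "(d 2 s)(e0 := 0) = t" and b_s: "m 2 b' = b + q 1 s"
        using cycle_lift_low[OF t1 b1] by blast
      \<comment> \<open>the cone differential negates the T-component, so the lift of (t, b) is (- s, b')\<close>
      have "- T_diff d e0 (Suc 0) (- s) = t"
        using lin_map_uminus[OF d_2_lin s] by (simp add: t_s[symmetric] numeral_2_eq_2 fun_eq_iff)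
      moreover have "TB_map d zF zG q (Suc 0) (- s) + B_diff d e0 zF m (Suc (Suc 0)) b' = b"
        using lin_map_uminus[OF q_1_lin s] by (simp add: b_s[unfolded numeral_2_eq_2])
      ultimately show ?thesis
        using 0 fmod_uminus[OF s] b' by (auto simp: numeral_2_eq_2)
    next
      case (Suc k)
      then obtain s b' where s: "s \<in> fmod (BF (Suc (Suc (Suc k))))"
        and b': "b' \<in> fmod (BG (Suc (Suc (Suc k))))"
        and "d (Suc (Suc (Suc k))) s = t" and "m (Suc (Suc (Suc k))) b' = b + q (Suc (Suc k)) s"
        using cycle_lift_high[of t k b] t b t_cycle cycle by auto
      moreover have "d (Suc (Suc (Suc k))) (- s) = - d (Suc (Suc (Suc k))) s"
        and "q (Suc (Suc k)) (- s) = - q (Suc (Suc k)) s"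
        using lin_map_uminus[OF is_complex_lin_map[OF F_complex] s] lin_map_uminus[OF q_lin s] by simp_all
      ultimately show ?thesis
        using Suc fmod_uminus[OF s] by (intro bexI[of _ "- s"] bexI[of _ b']) auto
    qed
  qed
qed

lemma cone_image:
  "(\<lambda>x. cone_diff (T_diff d e0) (B_diff d e0 zF m) (TB_map d zF zG q) 1 x (Inr zG))
       ` fmod (cone_basis (T_basis BF e0) BG 1)
     = ideal_sum ((\<lambda>x. d 1 x zF) ` fmod (BF 1 - {e0})) (ideal_prod \<aa> (ideal_gen {d 1 (basis_vec e0) zF}))"
    (is "?D ` ?C = ?J")
proof -
  let ?c = "d 1 (basis_vec e0) zF"
  have J: "?J = {d 1 t zF + a * ?c | t a. t \<in> fmod (BF 1 - {e0}) \<and> a \<in> \<aa>}"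
    unfolding ideal_prod_principal[OF a_ideal] ideal_sum_def by blast
  have D: "?D x = d 1 (x \<circ> Inl) zF + (- m 1 (x \<circ> Inr) zG) * ?c" for x
    by (simp add: cone_diff_def)
  have C: "x \<in> ?C \<longleftrightarrow> x \<circ> Inl \<in> fmod (BF 1 - {e0}) \<and> x \<circ> Inr \<in> fmod (BG 1)" for x
    using fmod_cone_basis_Suc[of x "T_basis BF e0" BG 0] by simp
  have neg: "- a \<in> \<aa>" if "a \<in> \<aa>" for a
    using a_ideal that unfolding is_ideal_def by (metis mult_minus1)
  show ?thesis
  proof (intro equalityI subsetI)
    fix y assume "y \<in> ?D ` ?C"
    then obtain x where "x \<in> ?C" and "y = ?D x" by blast
    then show "y \<in> ?J"
      unfolding J D C using neg G_image by blast
  next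
    fix y assume "y \<in> ?J"
    then obtain t a where t: "t \<in> fmod (BF 1 - {e0})" and a: "a \<in> \<aa>" and y: "y = d 1 t zF + a * ?c"
      unfolding J by blast
    obtain b where b: "b \<in> fmod (BG 1)" and "m 1 b zG = - a"
      using neg[OF a] G_image by (metis imageE)
    then have "y = ?D (case_sum t b)"
      unfolding y D by (simp add: case_sum_o_inj)
    moreover have "case_sum t b \<in> ?C"
      unfolding C using t b by (simp add: case_sum_o_inj)
    ultimately show "y \<in> ?D ` ?C"
      by blast
  qed
qed

lemma cone_free_res:
  "free_res_quot
     (ideal_sum ((\<lambda>x. d 1 x zF) ` fmod (BF 1 - {e0})) (ideal_prod \<aa> (ideal_gen {d 1 (basis_vec e0) zF})))
     (cone_basis (T_basis BF e0) BG) (cone_diff (T_diff d e0) (B_diff d e0 zF m) (TB_map d zF zG q))"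
proof -
  have "cone_basis (T_basis BF e0) BG 0 = {Inr zG}"
    by (simp add: cone_basis_def G0)
  then show ?thesis
    unfolding free_res_quot_def
    using is_complex_cone[OF T_complex B_complex TB_chain_map] cone_image cone_exact by blast
qed

end

theorem theorem2p5:
  fixes I \<aa> :: "('v::finite, 'k::field) poly_ring set"
    and BF :: "nat \<Rightarrow> 'b set" and dgF :: "nat \<Rightarrow> 'b \<Rightarrow> int"
    and d :: "nat \<Rightarrow> ('b \<Rightarrow> ('v, 'k) poly_ring) \<Rightarrow> ('b \<Rightarrow> ('v, 'k) poly_ring)"
    and zF e0 :: 'b
    and BG :: "nat \<Rightarrow> 'c set" and dgG :: "nat \<Rightarrow> 'c \<Rightarrow> int"
    and m :: "nat \<Rightarrow> ('c \<Rightarrow> ('v, 'k) poly_ring) \<Rightarrow> ('c \<Rightarrow> ('v, 'k) poly_ring)"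
    and zG :: 'c
    and q :: "nat \<Rightarrow> ('b \<Rightarrow> ('v, 'k) poly_ring) \<Rightarrow> ('c \<Rightarrow> ('v, 'k) poly_ring)"
    and J :: "('v, 'k) poly_ring set"
  assumes I_homog: "homog_ideal I"
    and F_res: "homog_free_res_quot I BF dgF d"
    and F0: "BF 0 = {zF}"
    and e0: "e0 \<in> BF 1"
    and a_homog: "homog_ideal \<aa>"
    and d0_in_a: "\<forall>x\<in>fmod (BF 2). d 2 x e0 \<in> \<aa>"
    and G_res: "homog_free_res_quot \<aa> BG dgG m"
    and G0: "BG 0 = {zG}"
    and q1_lin: "lin_map (BF 2) (BG 1) (q 1)"
    and qk_lin: "\<forall>k\<ge>2. lin_map (BF (Suc k)) (BG k) (q k)"
    and q1: "\<forall>x\<in>fmod (BF 2). m 1 (q 1 x) = (\<lambda>w. if w = zG then d 2 x e0 else 0)"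
    and qk: "\<forall>k\<ge>2. \<forall>x\<in>fmod (BF (Suc k)). m k (q k x) = q (k - 1) (d (Suc k) x)"
    and J_def: "J = ideal_sum ((\<lambda>x. d 1 x zF) ` fmod (BF 1 - {e0}))
                      (ideal_prod \<aa> (ideal_gen {d 1 (basis_vec e0) zF}))"
  shows "chain_map (T_basis BF e0) (T_diff d e0) BG (B_diff d e0 zF m) (TB_map d zF zG q)
       \<and> free_res_quot J (cone_basis (T_basis BF e0) BG)
           (cone_diff (T_diff d e0) (B_diff d e0 zF m) (TB_map d zF zG q))"
proof -
  have q_lin: "lin_map (BF (Suc (Suc k))) (BG (Suc k)) (q (Suc k))" for k
    using q1_lin qk_lin[rule_format, of "Suc k"] by (cases k) (auto simp: numeral_2_eq_2)
  have q_Suc: "m (Suc (Suc k)) (q (Suc (Suc k)) x) = q (Suc k) (d (Suc (Suc (Suc k))) x)"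
    if "x \<in> fmod (BF (Suc (Suc (Suc k))))" for k x
    using qk that by auto
  interpret trimming I \<aa> BF d zF e0 BG m zG q
  proof
    show "free_res_quot I BF d" "free_res_quot \<aa> BG m"
      using F_res G_res by (simp_all add: homog_free_res_quot_def)
    show "is_ideal \<aa>"
      using a_homog by (simp add: homog_ideal_def)
  qed (use F0 e0 G0 q1 q_lin q_Suc in auto)
  show ?thesis
    using TB_chain_map cone_free_res by (simp add: J_def)
qed

end
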